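(* For every integer $n\geq 4$, the wheel $W_n=C_n\lor K_1$ satisfies $\eta(W_n)=2$ if $n$ is even and $\eta(W_n)=3$ if $n$ is odd.
   Context: All graphs are finite, simple and undirected. $C_n$ is the cycle on $n$ vertices, $K_1$ is the graph with one vertex, and $G_1\lor G_2$ (join) is the graph on $V(G_1)\cup V(G_2)$ with edges $E(G_1)\cup E(G_2)\cup\{(u,v):u\in V(G_1),v\in V(G_2)\}$. For a vertex $v$, $N(v)$ is its set of neighbours. For a positive integer $k$, $[k]=\{1,\dots,k\}$. For a labeling $f:V(G)\to[k]$ and $S\subseteq V(G)$, $f(S)=\sum_{u\in S}f(u)$. A labeling $f:V(G)\to[k]$ is an additive $k$-coloring if $f(N(u))\neq f(N(v))$ for every edge $(u,v)$ of $G$. The additive chromatic number $\eta(G)$ is the least $k$ for which $G$ has an additive $k$-coloring. *)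

theory Defs
  imports Main
begin

definition simple_graph :: "'a set \<Rightarrow> 'a set set \<Rightarrow> bool" where
  "simple_graph V E \<longleftrightarrow> finite V \<and> (\<forall>e\<in>E. e \<subseteq> V \<and> card e = 2)"

definition nbhd :: "'a set set \<Rightarrow> 'a \<Rightarrow> 'a set" where
  "nbhd E v = {u. {u, v} \<in> E}"

definition additive_coloring :: "'a set \<Rightarrow> 'a set set \<Rightarrow> nat \<Rightarrow> ('a \<Rightarrow> nat) \<Rightarrow> bool" where
  "additive_coloring V E k f \<longleftrightarrow>
     (\<forall>v\<in>V. f v \<in> {1..k}) \<and>
     (\<forall>u v. {u, v} \<in> E \<longrightarrow> sum f (nbhd E u) \<noteq> sum f (nbhd E v))"

definition additive_chromatic_number :: "'a set \<Rightarrow> 'a set set \<Rightarrow> nat" where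
  "additive_chromatic_number V E = (LEAST k. k > 0 \<and> (\<exists>f. additive_coloring V E k f))"

text \<open>Wheel W_n = C_n join K_1: cycle vertices 0..n-1, hub vertex n.\<close>
definition wheel_vertices :: "nat \<Rightarrow> nat set" where
  "wheel_vertices n = {0..n}"

definition wheel_edges :: "nat \<Rightarrow> nat set set" where
  "wheel_edges n = {{i, (i + 1) mod n} | i. i < n} \<union> {{i, n} | i. i < n}"

end

theory Submission imports Defs begin

text \<open>On a rim vertex i of the wheel the neighbourhood sum is f(i-1) + f(i+1) + f(hub), so a
  rim edge {i, i+1} is properly coloured iff the sums f(i-1) + f(i+1) and f(i) + f(i+2) differ;
  in particular a constant labelling fails. If all labels lie in {1, 2}, a case check shows that
  the predicate f(i-1) + f(i+1) > f(i) + 1 then flips at every step around the rim, so the rim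
  has even length. Conversely the labelling 1, 2, 1, 2, ... works for even n, and for odd n the
  labelling 1, 2, ..., 2, 1, 1, 3 works; the hub edges are harmless because the hub sees the
  whole rim, whose total exceeds every rim neighbourhood sum.\<close>

definition cyc_succ :: "nat \<Rightarrow> nat \<Rightarrow> nat" where
  "cyc_succ n i = (if i = n - 1 then 0 else i + 1)"

definition cyc_pred :: "nat \<Rightarrow> nat \<Rightarrow> nat" where
  "cyc_pred n i = (if i = 0 then n - 1 else i - 1)"

definition cycle_nbr_sum :: "nat \<Rightarrow> (nat \<Rightarrow> nat) \<Rightarrow> nat \<Rightarrow> nat" where
  "cycle_nbr_sum n f i = f (cyc_pred n i) + f (cyc_succ n i)"

lemma cyc_succ_lt: "i < n \<Longrightarrow> cyc_succ n i < n"
  by (auto simp: cyc_succ_def)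

lemma cyc_pred_lt: "i < n \<Longrightarrow> cyc_pred n i < n"
  by (auto simp: cyc_pred_def)

lemma cyc_pred_succ [simp]: "i < n \<Longrightarrow> cyc_pred n (cyc_succ n i) = i"
  by (auto simp: cyc_succ_def cyc_pred_def)

lemma cyc_succ_pred [simp]: "i < n \<Longrightarrow> cyc_succ n (cyc_pred n i) = i"
  by (auto simp: cyc_succ_def cyc_pred_def)

lemma Suc_mod_eq_cyc_succ: "i < n \<Longrightarrow> Suc i mod n = cyc_succ n i"
  by (auto simp: cyc_succ_def mod_if)

lemma even_if_flips_around_cycle:
  assumes flip: "\<And>i. i < n \<Longrightarrow> c (cyc_succ n i) = (\<not> c i)"
  shows "even n"
proof (rule ccontr)
  assume "odd n"
  have parity: "c i = (c 0 = even i)" if "i < n" for i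
    using that
  proof (induction i)
    case (Suc i)
    then have "cyc_succ n i = Suc i" by (simp add: cyc_succ_def)
    with Suc flip[of i] show ?case by auto
  qed simp
  have "n - 1 < n" "even (n - 1)"
    using \<open>odd n\<close> by presburger+
  then have "c (n - 1) = c 0" "c (cyc_succ n (n - 1)) = (\<not> c (n - 1))"
    using parity[of "n - 1"] flip[of "n - 1"] by simp_all
  moreover have "cyc_succ n (n - 1) = 0" by (simp add: cyc_succ_def)
  ultimately show False by simp
qed

lemma wheel_edges_eq:
  "wheel_edges n = {{i, cyc_succ n i} | i. i < n} \<union> {{i, n} | i. i < n}"
proof -
  have "{{i, (i + 1) mod n} | i. i < n} = {{i, cyc_succ n i} | i. i < n}"
    by (rule Collect_cong) (metis Suc_eq_plus1 Suc_mod_eq_cyc_succ)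
  then show ?thesis unfolding wheel_edges_def by simp
qed

lemma nbhd_wheel_rim:
  assumes "n \<ge> 3" "i < n"
  shows "nbhd (wheel_edges n) i = {cyc_pred n i, cyc_succ n i, n}"
proof (intro set_eqI iffI)
  fix u assume "u \<in> nbhd (wheel_edges n) i"
  then obtain j where "j < n" "{u, i} = {j, cyc_succ n j} \<or> {u, i} = {j, n}"
    by (auto simp: nbhd_def wheel_edges_eq)
  then show "u \<in> {cyc_pred n i, cyc_succ n i, n}"
    using assms by (auto simp: doubleton_eq_iff cyc_succ_def cyc_pred_def split: if_splits)
next
  fix u assume "u \<in> {cyc_pred n i, cyc_succ n i, n}"
  moreover have "{cyc_pred n i, i} \<in> wheel_edges n"
    using assms cyc_pred_lt[of i n] cyc_succ_pred[of i n] unfolding wheel_edges_eq by force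
  moreover have "{cyc_succ n i, i} \<in> wheel_edges n" "{n, i} \<in> wheel_edges n"
    using assms unfolding wheel_edges_eq by (force simp: insert_commute)+
  ultimately have "{u, i} \<in> wheel_edges n" by blast
  then show "u \<in> nbhd (wheel_edges n) i" by (simp add: nbhd_def)
qed

lemma nbhd_wheel_hub: "nbhd (wheel_edges n) n = {..<n}"
proof (intro set_eqI iffI)
  fix u assume "u \<in> nbhd (wheel_edges n) n"
  then obtain j where "j < n" "{u, n} = {j, cyc_succ n j} \<or> {u, n} = {j, n}"
    by (auto simp: nbhd_def wheel_edges_eq)
  then show "u \<in> {..<n}"
    using cyc_succ_lt[of j n] by (auto simp: doubleton_eq_iff)
next
  fix u assume "u \<in> {..<n}"
  then have "{u, n} \<in> wheel_edges n" by (auto simp: wheel_edges_eq)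
  then show "u \<in> nbhd (wheel_edges n) n" by (simp add: nbhd_def)
qed

lemma forall_wheel_edges_iff:
  assumes sym: "\<And>u v. P u v \<Longrightarrow> P v u"
  shows "(\<forall>u v. {u, v} \<in> wheel_edges n \<longrightarrow> P u v) \<longleftrightarrow>
    (\<forall>i<n. P i (cyc_succ n i)) \<and> (\<forall>i<n. P i n)"
proof safe
  fix u v assume rim: "\<forall>i<n. P i (cyc_succ n i)" and hub: "\<forall>i<n. P i n"
    and "{u, v} \<in> wheel_edges n"
  then obtain i where "i < n" "{u, v} = {i, cyc_succ n i} \<or> {u, v} = {i, n}"
    by (auto simp: wheel_edges_eq)
  then show "P u v"
    using rim hub sym by (auto simp: doubleton_eq_iff)
qed (auto simp: wheel_edges_eq)

lemma sum_nbhd_wheel_rim: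
  assumes "n \<ge> 3" "i < n"
  shows "sum f (nbhd (wheel_edges n) i) = cycle_nbr_sum n f i + f n"
proof -
  have "cyc_pred n i \<noteq> cyc_succ n i" "cyc_pred n i \<noteq> n" "cyc_succ n i \<noteq> n"
    using assms by (auto simp: cyc_succ_def cyc_pred_def)
  then show ?thesis
    using assms by (simp add: nbhd_wheel_rim cycle_nbr_sum_def add.assoc)
qed

lemma additive_coloring_wheel_iff:
  assumes "n \<ge> 3"
  shows "additive_coloring (wheel_vertices n) (wheel_edges n) k f \<longleftrightarrow>
    (\<forall>v\<le>n. f v \<in> {1..k}) \<and>
    (\<forall>i<n. cycle_nbr_sum n f i \<noteq> cycle_nbr_sum n f (cyc_succ n i)) \<and>
    (\<forall>i<n. cycle_nbr_sum n f i + f n \<noteq> sum f {..<n})"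
proof -
  have rim: "sum f (nbhd (wheel_edges n) i) \<noteq> sum f (nbhd (wheel_edges n) (cyc_succ n i)) \<longleftrightarrow>
      cycle_nbr_sum n f i \<noteq> cycle_nbr_sum n f (cyc_succ n i)" if "i < n" for i
    using assms that cyc_succ_lt[OF that] by (simp add: sum_nbhd_wheel_rim)
  have hub: "sum f (nbhd (wheel_edges n) i) \<noteq> sum f (nbhd (wheel_edges n) n) \<longleftrightarrow>
      cycle_nbr_sum n f i + f n \<noteq> sum f {..<n}" if "i < n" for i
    using assms that by (simp add: sum_nbhd_wheel_rim nbhd_wheel_hub)
  have "(\<forall>u v. {u, v} \<in> wheel_edges n \<longrightarrow>
          sum f (nbhd (wheel_edges n) u) \<noteq> sum f (nbhd (wheel_edges n) v)) \<longleftrightarrow>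
      (\<forall>i<n. sum f (nbhd (wheel_edges n) i) \<noteq> sum f (nbhd (wheel_edges n) (cyc_succ n i))) \<and>
      (\<forall>i<n. sum f (nbhd (wheel_edges n) i) \<noteq> sum f (nbhd (wheel_edges n) n))"
    by (rule forall_wheel_edges_iff) auto
  then show ?thesis
    using rim hub by (auto simp: additive_coloring_def wheel_vertices_def)
qed

lemma wheel_additive_coloring_ge_2:
  assumes "n \<ge> 3" "additive_coloring (wheel_vertices n) (wheel_edges n) k f"
  shows "k \<ge> 2"
proof (rule ccontr)
  assume "\<not> k \<ge> 2"
  then have "f v = 1" if "v \<le> n" for v
    using assms that by (force simp: additive_coloring_wheel_iff)
  then have "cycle_nbr_sum n f 0 = cycle_nbr_sum n f (cyc_succ n 0)"
    using assms(1) cyc_pred_lt cyc_succ_lt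
    by (simp add: cycle_nbr_sum_def less_imp_le_nat)
  with assms show False by (simp add: additive_coloring_wheel_iff)
qed

lemma two_valued_sums_flip:
  fixes x y z w :: nat
  assumes "x \<in> {1..2}" "y \<in> {1..2}" "z \<in> {1..2}" "w \<in> {1..2}" "x + z \<noteq> y + w"
  shows "(y + 1 < x + z) \<noteq> (z + 1 < y + w)"
  using assms by auto

lemma wheel_additive_2_coloring_even:
  assumes n: "n \<ge> 3" and col: "additive_coloring (wheel_vertices n) (wheel_edges n) 2 f"
  shows "even n"
proof (rule even_if_flips_around_cycle)
  fix i assume i: "i < n"
  note lt = cyc_pred_lt[OF i] cyc_succ_lt[OF i] cyc_succ_lt[OF cyc_succ_lt[OF i]]
  have "f v \<in> {1..2}" if "v < n" for v
    using col n that by (simp add: additive_coloring_wheel_iff)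
  moreover have "cycle_nbr_sum n f i \<noteq> cycle_nbr_sum n f (cyc_succ n i)"
    using col n i by (simp add: additive_coloring_wheel_iff)
  ultimately have "(f i + 1 < cycle_nbr_sum n f i) \<noteq>
      (f (cyc_succ n i) + 1 < cycle_nbr_sum n f (cyc_succ n i))"
    using i lt two_valued_sums_flip[of "f (cyc_pred n i)" "f i" "f (cyc_succ n i)"
        "f (cyc_succ n (cyc_succ n i))"]
    by (simp add: cycle_nbr_sum_def)
  then show "(f (cyc_succ n i) + 1 < cycle_nbr_sum n f (cyc_succ n i)) =
      (\<not> f i + 1 < cycle_nbr_sum n f i)"
    by blast
qed

lemma sum_alternating:
  fixes a b :: "'a::comm_semiring_1"
  shows "(\<Sum>i<2 * m. if even i then a else b) = of_nat m * (a + b)"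
  by (induction m) (simp_all add: algebra_simps)

lemma wheel_even_additive_2_coloring:
  assumes n: "n \<ge> 4" "even n"
  shows "additive_coloring (wheel_vertices n) (wheel_edges n) 2 (\<lambda>i. if even i then 1 else 2)"
    (is "additive_coloring _ _ _ ?f")
proof -
  obtain m where m: "n = 2 * m" using n(2) by blast
  have nbr_sum: "cycle_nbr_sum n ?f i = (if even i then 4 else 2)" if "i < n" for i
    using n that by (auto simp: cycle_nbr_sum_def cyc_succ_def cyc_pred_def)
  have "sum ?f {..<n} = 3 * m"
    using sum_alternating[where m = m and a = "1::nat" and b = 2] m by simp
  moreover have "m \<ge> 2" using n m by simp
  ultimately have hub: "cycle_nbr_sum n ?f i + ?f n \<noteq> sum ?f {..<n}" if "i < n" for i
    using n(2) that by (simp add: nbr_sum)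
  have rim: "cycle_nbr_sum n ?f i \<noteq> cycle_nbr_sum n ?f (cyc_succ n i)" if "i < n" for i
    using n that cyc_succ_lt[OF that] by (auto simp: nbr_sum cyc_succ_def)
  show ?thesis
    using n rim hub by (simp add: additive_coloring_wheel_iff)
qed

lemma wheel_odd_additive_3_coloring:
  assumes n: "n \<ge> 4" "odd n"
  shows "additive_coloring (wheel_vertices n) (wheel_edges n) 3
     (\<lambda>i. if i = n - 1 then 3 else if i = n - 2 then 1 else if even i then 1 else 2)"
    (is "additive_coloring _ _ _ ?f")
proof -
  obtain m where m: "n = 2 * m + 3" "m \<ge> 1"
  proof -
    obtain j where "n = 2 * j + 1" using n(2) by (rule oddE)
    with n(1) show thesis by (intro that[of "j - 1"]) auto
  qed
  define r where "r i = (if i = 0 then 5 else if i = 2 * m then 3 else if i = 2 * m + 1 then 4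
      else if i = 2 * m + 2 then 2 else if even i then 4 else (2::nat))" for i
  have nbr_sum: "cycle_nbr_sum n ?f i = r i" if "i < n" for i
  proof -
    have "i = 0 \<or> i = 2 * m \<or> i = 2 * m + 1 \<or> i = 2 * m + 2 \<or> 0 < i \<and> i < 2 * m"
      using that m by arith
    then consider "i = 0" | "i = 2 * m" | "i = 2 * m + 1" | "i = 2 * m + 2" | "0 < i \<and> i < 2 * m"
      by blast
    then show ?thesis
      by cases (use m in \<open>auto simp: cycle_nbr_sum_def cyc_succ_def cyc_pred_def r_def\<close>)
  qed
  have "n = Suc (Suc (Suc (2 * m)))" using m by simp
  then have "sum ?f {..<n} = sum ?f {..<2 * m} + ?f (2 * m) + ?f (Suc (2 * m)) + ?f (n - 1)"
    by (simp only: sum.lessThan_Suc diff_Suc_1)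
  moreover have "sum ?f {..<2 * m} = (\<Sum>i<2 * m. if even i then 1 else 2)"
    by (rule sum.cong) (use m in auto)
  moreover have "?f (2 * m) = 1" "?f (Suc (2 * m)) = 1" "?f (n - 1) = 3"
    using m by auto
  ultimately have total: "sum ?f {..<n} = 3 * m + 5"
    using sum_alternating[where m = m and a = "1::nat" and b = 2] by simp
  have hub_label: "?f n = 2" using m by auto
  have hub: "cycle_nbr_sum n ?f i + ?f n \<noteq> sum ?f {..<n}" if "i < n" for i
    using nbr_sum[OF that] total hub_label m(2) by (simp add: r_def)
  have rim: "cycle_nbr_sum n ?f i \<noteq> cycle_nbr_sum n ?f (cyc_succ n i)" if "i < n" for i
  proof -
    have "r i \<noteq> r (cyc_succ n i)"
      using m that by (auto simp: r_def cyc_succ_def)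
    then show ?thesis
      using nbr_sum[OF that] nbr_sum[OF cyc_succ_lt[OF that]] by simp
  qed
  show ?thesis
    using n rim hub by (simp add: additive_coloring_wheel_iff)
qed

theorem mainTheorem8:
  fixes n :: nat
  assumes "n \<ge> 4"
  shows "additive_chromatic_number (wheel_vertices n) (wheel_edges n) = (if even n then 2 else 3)"
  unfolding additive_chromatic_number_def
proof (rule Least_equality)
  show "0 < (if even n then 2 else 3::nat) \<and>
      (\<exists>f. additive_coloring (wheel_vertices n) (wheel_edges n) (if even n then 2 else 3) f)"
    using wheel_even_additive_2_coloring[OF assms] wheel_odd_additive_3_coloring[OF assms] by auto
next
  fix k assume "0 < k \<and> (\<exists>f. additive_coloring (wheel_vertices n) (wheel_edges n) k f)"
  then obtain f where f: "additive_coloring (wheel_vertices n) (wheel_edges n) k f" by blast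
  have "k \<ge> 2"
    using wheel_additive_coloring_ge_2[OF _ f] assms by simp
  moreover have "even n" if "k = 2"
    using wheel_additive_2_coloring_even[of n f] f assms that by simp
  ultimately show "(if even n then 2 else 3) \<le> k" by (cases "k = 2") auto
qed

end
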